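(* Let $\mathcal{A}=(Q,\Sigma,q_0,\Delta,F,C)$ be an SPBA such that accepting states appear only in the leaves of the condensation of $\mathcal{A}$, and there is at most one accepting state per leaf. Then $S_\omega(\mathcal{A})=\bigcup_{f\in F}S_\omega(Q,\Sigma,q_0,\Delta,\{f\},C)$.
   Context: A semi-linear set in $\mathbb{N}^d$ is a finite union of sets $\{b_0+\sum_{j=1}^\ell b_jz_j\mid z_j\in\mathbb{N}\}$ with $b_j\in\mathbb{N}^d$. A (strong reset) Parikh–Büchi automaton (SPBA) of dimension $d$ is $\mathcal{A}=(Q,\Sigma,q_0,\Delta,F,C)$ with finite $Q$, $q_0\in Q$, $F\subseteq Q$, finite $\Delta\subseteq Q\times\Sigma\times\mathbb{N}^d\times Q$, and semi-linear $C\subseteq\mathbb{N}^d$. A run on an infinite word $\alpha$ is $r=r_1r_2\cdots$ with $r_i=(p_{i-1},\alpha_i,\mathbf{v}_i,p_i)\in\Delta$, $p_0=q_0$; with $\rho(r_a\cdots r_b)=\sum_{i=a}^b\mathbf{v}_i$. Setting $k_0=0$ and letting $k_1<k_2<\cdots$ be all positions with $p_{k_i}\in F$, the run is accepting if this sequence is infinite and $\rho(r_{k_{i-1}+1}\cdots r_{k_i})\in C$ for all $i\ge1$. $S_\omega(\mathcal{A})$ is the set of infinite words with an accepting run. The underlying graph of $\mathcal{A}$ has vertex set $Q$ and an edge $(p,q)$ iff some transition goes from $p$ to $q$. A strongly connected component (SCC) is a maximal set of mutually reachable vertices. The condensation is the DAG of SCCs with an edge $(U,V)$ iff some $u\in U$,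 $v\in V$ have an edge $(u,v)$; its leaves are SCCs without outgoing edges. *)

theory Defs
  imports Main "HOL-Library.Infinite_Set" "HOL-Library.Function_Algebras"
begin

(* Vectors of N^d are modelled as functions 'd => nat for a finite index type 'd (d = CARD('d)). *)

definition linear_set :: "('d \<Rightarrow> nat) \<Rightarrow> ('d \<Rightarrow> nat) list \<Rightarrow> ('d \<Rightarrow> nat) set" where
  "linear_set b0 bs = {b0 + (\<Sum>j<length bs. (\<lambda>x. z j * (bs ! j) x)) | z. True}"

definition semilinear :: "('d::finite \<Rightarrow> nat) set \<Rightarrow> bool" where
  "semilinear C \<longleftrightarrow> (\<exists>L. finite L \<and> C = (\<Union>(b0, bs)\<in>L. linear_set b0 bs))"

type_synonym ('q, 'a, 'd) trans = "'q \<times> 'a \<times> ('d \<Rightarrow> nat) \<times> 'q"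

record ('q, 'a, 'd) spba =
  states :: "'q set"
  alphabet :: "'a set"
  init :: 'q
  delta :: "('q, 'a, 'd) trans set"
  acc :: "'q set"
  constr :: "('d \<Rightarrow> nat) set"

definition wf_spba :: "('q, 'a, 'd::finite) spba \<Rightarrow> bool" where
  "wf_spba A \<longleftrightarrow> finite (states A) \<and> init A \<in> states A \<and> acc A \<subseteq> states A
     \<and> finite (delta A)
     \<and> (\<forall>(p, a, v, q)\<in>delta A. p \<in> states A \<and> a \<in> alphabet A \<and> q \<in> states A)
     \<and> semilinear (constr A)"

(* A run is r : nat => transition, where r i is the transition r_{i+1} of the paper
   (reading letter alpha i, the (i+1)-th letter). *)
definition is_run :: "('q, 'a, 'd) spba \<Rightarrow> (nat \<Rightarrow> 'a) \<Rightarrow> (nat \<Rightarrow> ('q, 'a, 'd) trans) \<Rightarrow> bool" where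
  "is_run A \<alpha> r \<longleftrightarrow> (\<forall>i. r i \<in> delta A \<and> fst (snd (r i)) = \<alpha> i)
     \<and> fst (r 0) = init A
     \<and> (\<forall>i. snd (snd (snd (r i))) = fst (r (Suc i)))"

(* state p_i of the paper: p_0 = q0, p_i = target of r_i *)
definition run_state :: "('q, 'a, 'd) spba \<Rightarrow> (nat \<Rightarrow> ('q, 'a, 'd) trans) \<Rightarrow> nat \<Rightarrow> 'q" where
  "run_state A r i = (if i = 0 then init A else snd (snd (snd (r (i - 1)))))"

(* rho(r_a ... r_b) with paper indices a, b (1-based) *)
definition rho :: "(nat \<Rightarrow> ('q, 'a, 'd) trans) \<Rightarrow> nat \<Rightarrow> nat \<Rightarrow> ('d \<Rightarrow> nat)" where
  "rho r a b = (\<Sum>i\<in>{a..b}. fst (snd (snd (r (i - 1)))))"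

(* positions k_1 < k_2 < ... with p_{k_i} in F; k_0 = 0 *)
definition acc_pos :: "('q, 'a, 'd) spba \<Rightarrow> (nat \<Rightarrow> ('q, 'a, 'd) trans) \<Rightarrow> nat \<Rightarrow> nat" where
  "acc_pos A r j = (if j = 0 then 0
       else enumerate {i. 1 \<le> i \<and> run_state A r i \<in> acc A} (j - 1))"

definition accepting_run :: "('q, 'a, 'd) spba \<Rightarrow> (nat \<Rightarrow> ('q, 'a, 'd) trans) \<Rightarrow> bool" where
  "accepting_run A r \<longleftrightarrow> infinite {i. 1 \<le> i \<and> run_state A r i \<in> acc A}
     \<and> (\<forall>j\<ge>1. rho r (Suc (acc_pos A r (j - 1))) (acc_pos A r j) \<in> constr A)"

definition S_omega :: "('q, 'a, 'd) spba \<Rightarrow> (nat \<Rightarrow> 'a) set" where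
  "S_omega A = {\<alpha>. (\<forall>i. \<alpha> i \<in> alphabet A) \<and> (\<exists>r. is_run A \<alpha> r \<and> accepting_run A r)}"

definition edge :: "('q, 'a, 'd) spba \<Rightarrow> ('q \<times> 'q) set" where
  "edge A = {(p, q). \<exists>a v. (p, a, v, q) \<in> delta A}"

definition scc_of :: "('q, 'a, 'd) spba \<Rightarrow> 'q \<Rightarrow> 'q set" where
  "scc_of A q = {p \<in> states A. (q, p) \<in> (edge A)\<^sup>* \<and> (p, q) \<in> (edge A)\<^sup>*}"

definition is_leaf_scc :: "('q, 'a, 'd) spba \<Rightarrow> 'q set \<Rightarrow> bool" where
  "is_leaf_scc A U \<longleftrightarrow> (\<forall>u\<in>U. \<forall>v. (u, v) \<in> edge A \<longrightarrow> v \<in> U)"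

end

theory Submission
  imports Defs
begin

text \<open>A run only moves downwards in the condensation. Once it visits an accepting state \<open>f\<close>
  it is trapped in the leaf SCC of \<open>f\<close>, and any accepting state \<open>g\<close> visited earlier reaches \<open>f\<close>,
  so \<open>f\<close> lies in the leaf SCC of \<open>g\<close> and \<open>g = f\<close>. Hence a run visits at most one accepting state
  \<open>f\<close>, and its accepting positions are the same for the sets of accepting states \<open>F\<close> and \<open>{f}\<close>.\<close>

lemma run_state_Suc: "run_state A r (Suc i) = snd (snd (snd (r i)))"
  by (simp add: run_state_def)

lemma run_step_in_edge:
  assumes "is_run A \<alpha> r"
  shows "(run_state A r i, run_state A r (Suc i)) \<in> edge A"
proof -
  have "run_state A r i = fst (r i)"
    using assms by (cases i) (auto simp: is_run_def run_state_def)
  moreover have "r i \<in> delta A"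
    using assms by (simp add: is_run_def)
  ultimately show ?thesis
    unfolding edge_def run_state_Suc by (cases "r i") auto
qed

lemma run_state_reachable:
  assumes "is_run A \<alpha> r" "i \<le> j"
  shows "(run_state A r i, run_state A r j) \<in> (edge A)\<^sup>*"
  using assms(2)
proof (induction j rule: dec_induct)
  case base
  then show ?case by simp
next
  case (step j)
  then show ?case
    using run_step_in_edge[OF assms(1)] by (blast intro: rtrancl_into_rtrancl)
qed

lemma reachable_from_leaf_scc:
  assumes "is_leaf_scc A (scc_of A f)" "f \<in> states A" "(f, g) \<in> (edge A)\<^sup>*"
  shows "scc_of A g = scc_of A f"
proof -
  have "edge A `` scc_of A f \<subseteq> scc_of A f"
    using assms(1) by (auto simp: is_leaf_scc_def)
  then have "(edge A)\<^sup>* `` scc_of A f = scc_of A f"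
    by (rule Image_closed_trancl)
  moreover have "f \<in> scc_of A f"
    using assms(2) by (simp add: scc_of_def)
  ultimately have "(g, f) \<in> (edge A)\<^sup>*"
    using assms(3) by (auto simp: scc_of_def)
  with assms(3) show ?thesis
    unfolding scc_of_def by (blast intro: rtrancl_trans)
qed

lemma run_visits_one_acc_state:
  assumes "acc A \<subseteq> states A"
    and leaf: "\<forall>f\<in>acc A. is_leaf_scc A (scc_of A f)"
    and uniq: "\<forall>f\<in>acc A. \<forall>g\<in>acc A. scc_of A f = scc_of A g \<longrightarrow> f = g"
    and run: "is_run A \<alpha> r"
    and "run_state A r i \<in> acc A" "run_state A r j \<in> acc A"
  shows "run_state A r i = run_state A r j"
proof -
  have reach_eq: "f = g" if "f \<in> acc A" "g \<in> acc A" "(f, g) \<in> (edge A)\<^sup>*" for f g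
    using reachable_from_leaf_scc[of A f g] that assms(1) leaf uniq by blast
  show ?thesis
    using reach_eq[OF assms(5,6)] reach_eq[OF assms(6,5)] run_state_reachable[OF run] nle_le
    by metis
qed

lemma is_run_acc_update [simp]: "is_run (A\<lparr>acc := F\<rparr>) = is_run A"
  by (simp add: is_run_def fun_eq_iff)

lemma run_state_acc_update [simp]: "run_state (A\<lparr>acc := F\<rparr>) = run_state A"
  by (simp add: run_state_def fun_eq_iff)

lemma accepting_run_acc_cong:
  assumes "\<And>i. run_state A r i \<in> acc A \<longleftrightarrow> run_state A r i \<in> F"
  shows "accepting_run (A\<lparr>acc := F\<rparr>) r = accepting_run A r"
proof -
  have "{i. 1 \<le> i \<and> run_state (A\<lparr>acc := F\<rparr>) r i \<in> acc (A\<lparr>acc := F\<rparr>)}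
      = {i. 1 \<le> i \<and> run_state A r i \<in> acc A}"
    using assms by simp
  then show ?thesis
    unfolding accepting_run_def acc_pos_def by simp
qed

lemma accepting_run_visits_acc:
  assumes "accepting_run A r"
  obtains i where "run_state A r i \<in> acc A"
  using assms not_finite_existsD by (auto simp: accepting_run_def)

theorem corollary3:
  fixes A :: "('q, 'a, 'd::finite) spba"
  assumes "wf_spba A"
    and "\<forall>f\<in>acc A. is_leaf_scc A (scc_of A f)"
    and "\<forall>f\<in>acc A. \<forall>g\<in>acc A. scc_of A f = scc_of A g \<longrightarrow> f = g"
  shows "S_omega A = (\<Union>f\<in>acc A. S_omega (A\<lparr>acc := {f}\<rparr>))"
proof -
  have single_acc: "accepting_run (A\<lparr>acc := {run_state A r k}\<rparr>) r = accepting_run A r"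
    if "is_run A \<alpha> r" "run_state A r k \<in> acc A" for \<alpha> r k
    using that run_visits_one_acc_state[OF _ assms(2,3)] assms(1)
    by (intro accepting_run_acc_cong) (auto simp: wf_spba_def)
  have "\<alpha> \<in> S_omega A \<longleftrightarrow> (\<exists>f\<in>acc A. \<alpha> \<in> S_omega (A\<lparr>acc := {f}\<rparr>))" for \<alpha>
  proof
    assume "\<alpha> \<in> S_omega A"
    then obtain r where "\<forall>i. \<alpha> i \<in> alphabet A" "is_run A \<alpha> r" "accepting_run A r"
      by (auto simp: S_omega_def)
    moreover obtain k where "run_state A r k \<in> acc A"
      using \<open>accepting_run A r\<close> by (rule accepting_run_visits_acc)
    ultimately show "\<exists>f\<in>acc A. \<alpha> \<in> S_omega (A\<lparr>acc := {f}\<rparr>)"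
      using single_acc[of \<alpha> r k] by (auto simp: S_omega_def)
  next
    assume "\<exists>f\<in>acc A. \<alpha> \<in> S_omega (A\<lparr>acc := {f}\<rparr>)"
    then obtain f r where "f \<in> acc A" "\<forall>i. \<alpha> i \<in> alphabet A" "is_run A \<alpha> r"
        "accepting_run (A\<lparr>acc := {f}\<rparr>) r"
      by (auto simp: S_omega_def)
    moreover obtain k where "run_state A r k = f"
      using \<open>accepting_run (A\<lparr>acc := {f}\<rparr>) r\<close> by (rule accepting_run_visits_acc) simp
    ultimately show "\<alpha> \<in> S_omega A"
      using single_acc[of \<alpha> r k] by (auto simp: S_omega_def)
  qed
  then show ?thesis by blast
qed

end
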